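(* Let $d\ge1$, let $\mu$ be a probability distribution supported in the unit hypercube $[0,1]^d$, let $\mu_n$ be an empirical distribution of $\mu$ on $n$ samples, let $\alpha\ge0$, and let $\mathcal{G}$ be a grid partitioning $[0,1]^d$ into axis-aligned cubic cells of side length $n^{-\alpha}$. Then with high probability $\mathrm{Exc}_\mu(\mathcal{G})=\tilde O\!\left(n^{\frac{d\alpha}{2}-\frac12}\right)$.
   Context: For a cell $\Box$ of $\mathcal{G}$, $\mu(\Box)$ and $\mu_n(\Box)$ denote the mass of $\mu$ and $\mu_n$ in $\Box$. The excess of a cell is $\mathrm{Exc}_\mu(\Box)=\max\{0,\mu(\Box)-\mu_n(\Box)\}$ and $\mathrm{Exc}_\mu(\mathcal{G})=\sum_{\Box\in\mathcal{G}}\mathrm{Exc}_\mu(\Box)$. An empirical distribution $\mu_n$ is $\frac1n\sum_{i=1}^n\delta_{x_i}$ with $x_i$ i.i.d. from $\mu$. $\tilde O(\cdot)$ hides polylogarithmic factors in $n$; "with high probability" means with probability at least $1-n^{-c}$ for some constant $c>0$. *)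

theory Defs
  imports "HOL-Probability.Probability"
begin

definition unit_cube :: "(real ^ 'd) set" where
  "unit_cube = {x. \<forall>i. 0 \<le> x $ i \<and> x $ i \<le> 1}"

text \<open>Each point of the cube is assigned to the cell whose i-th index is
  min(floor(x_i / s), M - 1); this partitions the cube (the last layer of
  cells is closed on the boundary face x_i = 1).\<close>
definition grid_size :: "real \<Rightarrow> nat" where
  "grid_size s = nat \<lceil>1 / s\<rceil>"

definition grid_index :: "real \<Rightarrow> real ^ 'd \<Rightarrow> 'd \<Rightarrow> nat" where
  "grid_index s x i = min (nat \<lfloor>x $ i / s\<rfloor>) (grid_size s - 1)"

definition grid_cells :: "real \<Rightarrow> ('d \<Rightarrow> nat) set" where
  "grid_cells s = {k. \<forall>i. k i < grid_size s}"

definition grid_cell :: "real \<Rightarrow> ('d \<Rightarrow> nat) \<Rightarrow> (real ^ 'd) set" where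
  "grid_cell s k = {x \<in> unit_cube. \<forall>i. grid_index s x i = k i}"

text \<open>Mass of the empirical distribution (1/n) sum_{j<n} delta_{xs j} in a set B.\<close>
definition emp_mass :: "nat \<Rightarrow> (nat \<Rightarrow> 'a) \<Rightarrow> 'a set \<Rightarrow> real" where
  "emp_mass n xs B = real (card {j \<in> {..<n}. xs j \<in> B}) / real n"

definition grid_excess :: "(real ^ 'd) measure \<Rightarrow> nat \<Rightarrow> (nat \<Rightarrow> real ^ 'd) \<Rightarrow> real \<Rightarrow> real" where
  "grid_excess \<mu> n xs s =
     (\<Sum>k\<in>grid_cells s. max 0 (measure \<mu> (grid_cell s k) - emp_mass n xs (grid_cell s k)))"

end

theory Submission
  imports Defs
begin

text \<open>For a fixed union U of cells, the empirical mass of U is an average of n i.i.d.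
  indicators, so by Hoeffding's inequality it falls below mu(U) - t with probability at most
  exp(-2 n t^2). The excess of the grid is exactly mu(U) - mu_n(U) for U the union of the cells
  of positive excess, so a union bound over all 2^K unions of the K <= (2 n^alpha)^d cells gives
  P(Exc > t) <= 2^K exp(-2 n t^2). For t = 2^d (ln n) n^(d alpha/2 - 1/2) the quantity
  n t^2 = 4^d (ln n)^2 n^(d alpha) dominates both K and ln n, so this is at most 1/n.\<close>

lemma indep_vars_PiM_components:
  assumes M: "\<And>i. i \<in> I \<Longrightarrow> prob_space (M i)" and I: "I \<noteq> {}"
  shows "prob_space.indep_vars (PiM I M) M (\<lambda>i x. x i) I"
proof -
  interpret P: prob_space "PiM I M" by (rule prob_space_PiM) (use M in auto)
  show ?thesis
  proof (subst P.indep_vars_iff_distr_eq_PiM'[OF I])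
    show "(\<lambda>x. x i) \<in> measurable (PiM I M) (M i)" if "i \<in> I" for i
      using that by measurable
    have "distr (PiM I M) (PiM I M) (\<lambda>x. \<lambda>i\<in>I. x i) = distr (PiM I M) (PiM I M) (\<lambda>x. x)"
      by (rule distr_cong) (auto simp: space_PiM)
    also have "\<dots> = PiM I (\<lambda>i. distr (PiM I M) (M i) (\<lambda>x. x i))"
      by (auto simp: distr_PiM_component M intro: PiM_cong)
    finally show "distr (PiM I M) (PiM I M) (\<lambda>x. \<lambda>i\<in>I. x i) = PiM I (\<lambda>i. distr (PiM I M) (M i) (\<lambda>x. x i))" .
  qed
qed

lemma emp_mass_eq_sum_indicator:
  "emp_mass n xs B = (\<Sum>j<n. indicator B (xs j)) / real n"
  by (simp add: emp_mass_def indicator_def sum.If_cases Int_def)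

lemma borel_measurable_emp_mass:
  assumes "B \<in> sets M"
  shows "(\<lambda>xs. emp_mass n xs B) \<in> borel_measurable (PiM {..<n} (\<lambda>_. M))"
  unfolding emp_mass_eq_sum_indicator using assms by measurable

lemma emp_mass_UN_disjoint:
  assumes "finite S" and "disjoint_family_on A S"
  shows "emp_mass n xs (\<Union>k\<in>S. A k) = (\<Sum>k\<in>S. emp_mass n xs (A k))"
proof -
  have "(\<Sum>j<n. indicator (\<Union>k\<in>S. A k) (xs j) :: real) = (\<Sum>j<n. \<Sum>k\<in>S. indicator (A k) (xs j))"
    using assms by (intro sum.cong refl indicator_UN_disjoint)
  then show ?thesis
    unfolding emp_mass_eq_sum_indicator by (simp add: sum.swap[of _ S] sum_divide_distrib)
qed

lemma emp_mass_lower_deviation: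
  assumes M: "prob_space M" and B: "B \<in> sets M" and n: "0 < n" and \<epsilon>: "0 \<le> \<epsilon>"
  shows "measure (PiM {..<n} (\<lambda>_. M))
           {xs \<in> space (PiM {..<n} (\<lambda>_. M)). emp_mass n xs B \<le> measure M B - \<epsilon>}
         \<le> exp (- 2 * real n * \<epsilon>\<^sup>2)"
proof -
  let ?P = "PiM {..<n} (\<lambda>_. M)"
  let ?X = "\<lambda>j xs. indicator B (xs j) :: real"
  have nonempty: "{..<n} \<noteq> {}" using n by auto
  interpret M: prob_space M by (rule M)
  interpret P: prob_space ?P by (rule prob_space_PiM) (use M in auto)
  have component: "distr ?P M (\<lambda>xs. xs j) = M" if "j < n" for j
    using distr_PiM_component[of "{..<n}" "\<lambda>_. M" j] M that by simp
  have distr_X: "distr ?P borel (?X j) = distr M borel (indicator B)" if "j < n" for j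
  proof -
    have "distr ?P borel (?X j) = distr (distr ?P M (\<lambda>xs. xs j)) borel (indicator B)"
      using that B by (subst distr_distr) (auto simp: comp_def)
    then show ?thesis using component[OF that] by simp
  qed
  have "P.expectation (?X 0) = integral\<^sup>L (distr ?P M (\<lambda>xs. xs 0)) (indicator B)"
    using n B by (subst integral_distr) auto
  also have "\<dots> = measure M B"
    using component[OF n] B by (simp add: M.emeasure_finite)
  finally have mean: "P.expectation (?X 0) = measure M B" .
  interpret H: Hoeffding_ineq_iid ?P "{..<n}" ?X "?X 0" 0 1 "P.expectation (?X 0)"
  proof unfold_locales
    show "P.indep_vars (\<lambda>_. borel) ?X {..<n}"
      using P.indep_vars_compose2[OF indep_vars_PiM_components[of "{..<n}" "\<lambda>_. M"],
              of "\<lambda>_. indicator B" "\<lambda>_. borel"] M n B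
      by auto
    show "distr ?P borel (?X j) = distr ?P borel (?X 0)" if "j \<in> {..<n}" for j
      using distr_X[of j] distr_X[OF n] that by simp
    show "?X 0 \<in> borel_measurable ?P"
      using measurable_compose[OF measurable_component_singleton[of 0 "{..<n}" "\<lambda>_. M"]
            borel_measurable_indicator[OF B]] n
      by (simp add: comp_def)
    show "AE xs in ?P. ?X 0 xs \<in> {0..1}"
      by (simp add: indicator_def)
  qed simp_all
  have event: "{xs \<in> space ?P. emp_mass n xs B \<le> measure M B - \<epsilon>}
      = {xs \<in> space ?P. (\<Sum>j\<in>{..<n}. ?X j xs) / real (card {..<n}) \<le> measure M B - \<epsilon>}"
    unfolding emp_mass_eq_sum_indicator card_lessThan ..
  show ?thesis
    unfolding event using H.Hoeffding_ineq_le'[OF \<epsilon> _ nonempty, unfolded mean] by simp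
qed

lemma sum_max_0_eq_sum_pos:
  fixes f :: "'a \<Rightarrow> 'b::linordered_ab_group_add"
  assumes "finite K"
  shows "(\<Sum>k\<in>K. max 0 (f k)) = (\<Sum>k\<in>{k \<in> K. 0 < f k}. f k)"
  using assms by (auto simp: sum.inter_filter max_def intro!: sum.cong)

lemma two_power_mul_exp_le:
  fixes x y :: real
  assumes "real k \<le> x" "y \<le> x"
  shows "2 ^ k * exp (- 2 * x) \<le> exp (- y)"
proof -
  have "(2::real) ^ k = exp (real k * ln 2)" by (simp add: exp_of_nat_mult)
  also have "\<dots> \<le> exp x"
    using mult_left_le[of "ln 2" "real k"] assms ln_2_less_1 by simp
  finally have "2 ^ k * exp (- 2 * x) \<le> exp x * exp (- 2 * x)" by simp
  also have "\<dots> = exp (- x)" by (simp flip: exp_add)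
  also have "\<dots> \<le> exp (- y)" using assms by simp
  finally show ?thesis .
qed

lemma mul_powr_half_sq:
  fixes x a :: real
  assumes "0 < x"
  shows "x * (x powr (a / 2 - 1 / 2))\<^sup>2 = x powr a"
proof -
  have "(x powr (a / 2 - 1 / 2))\<^sup>2 = x powr (a - 1)"
    using assms by (simp add: powr_power algebra_simps)
  then show ?thesis using powr_mult_base[of x "a - 1"] assms by simp
qed

lemma grid_size_le:
  assumes "0 < s" "s \<le> 1"
  shows "real (grid_size s) \<le> 2 / s"
proof -
  have "1 \<le> 1 / s" using assms by simp
  then show ?thesis unfolding grid_size_def by linarith
qed

lemma disjoint_family_grid_cell: "disjoint_family (grid_cell s)"
  unfolding disjoint_family_on_def grid_cell_def by auto

lemma grid_cells_eq_PiE: "grid_cells s = PiE UNIV (\<lambda>_. {..<grid_size s})"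
  by (auto simp: grid_cells_def PiE_UNIV_domain)

lemma finite_grid_cells: "finite (grid_cells s :: ('d::finite \<Rightarrow> nat) set)"
  unfolding grid_cells_eq_PiE by (rule finite_PiE) auto

lemma card_grid_cells: "card (grid_cells s :: ('d::finite \<Rightarrow> nat) set) = grid_size s ^ CARD('d)"
  unfolding grid_cells_eq_PiE by (simp add: card_PiE)

lemma grid_cell_borel [measurable]: "grid_cell s k \<in> sets borel"
  unfolding grid_cell_def unit_cube_def grid_index_def by measurable

lemma grid_excess_eq_union_deficit:
  fixes \<mu> :: "(real ^ 'd) measure"
  assumes "finite_measure \<mu>" and "sets \<mu> = sets borel"
  obtains S where "S \<subseteq> grid_cells s"
    and "grid_excess \<mu> n xs s
           = measure \<mu> (\<Union>k\<in>S. grid_cell s k) - emp_mass n xs (\<Union>k\<in>S. grid_cell s k)"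
proof -
  define S where
    "S = {k \<in> grid_cells s. 0 < measure \<mu> (grid_cell s k) - emp_mass n xs (grid_cell s k)}"
  have S: "S \<subseteq> grid_cells s" unfolding S_def by auto
  have fin: "finite S" using finite_subset[OF S finite_grid_cells] .
  have disj: "disjoint_family_on (grid_cell s) S"
    using disjoint_family_grid_cell by (rule disjoint_family_on_mono[rotated]) simp
  have "grid_excess \<mu> n xs s = (\<Sum>k\<in>S. measure \<mu> (grid_cell s k) - emp_mass n xs (grid_cell s k))"
    unfolding grid_excess_def S_def
    by (rule sum_max_0_eq_sum_pos[OF finite_grid_cells,
          of "\<lambda>k. measure \<mu> (grid_cell s k) - emp_mass n xs (grid_cell s k)" s])
  also have "\<dots> = measure \<mu> (\<Union>k\<in>S. grid_cell s k) - emp_mass n xs (\<Union>k\<in>S. grid_cell s k)"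
  proof -
    have "measure \<mu> (\<Union>k\<in>S. grid_cell s k) = (\<Sum>k\<in>S. measure \<mu> (grid_cell s k))"
      using measure_finite_Union[OF fin _ disj] finite_measure.emeasure_finite[OF assms(1)]
      by (simp add: assms(2) image_subset_iff)
    then show ?thesis by (simp add: emp_mass_UN_disjoint[OF fin disj] sum_subtractf)
  qed
  finally show ?thesis by (rule that[OF S])
qed

lemma borel_measurable_grid_excess:
  assumes "sets \<mu> = sets borel"
  shows "(\<lambda>xs. grid_excess \<mu> n xs s) \<in> borel_measurable (PiM {..<n} (\<lambda>_. \<mu>))"
  unfolding grid_excess_def using assms
  by (intro borel_measurable_sum borel_measurable_max borel_measurable_const
      borel_measurable_diff borel_measurable_emp_mass) auto

lemma prob_grid_excess_gt_le:
  fixes \<mu> :: "(real ^ 'd) measure"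
  assumes \<mu>: "prob_space \<mu>" and sets_eq: "sets \<mu> = sets borel" and n: "0 < n" and t: "0 \<le> t"
  shows "measure (PiM {..<n} (\<lambda>_. \<mu>))
           {xs \<in> space (PiM {..<n} (\<lambda>_. \<mu>)). t < grid_excess \<mu> n xs s}
         \<le> 2 ^ card (grid_cells s :: ('d \<Rightarrow> nat) set) * exp (- 2 * real n * t\<^sup>2)"
proof -
  let ?P = "PiM {..<n} (\<lambda>_. \<mu>)"
  let ?cells = "grid_cells s :: ('d \<Rightarrow> nat) set"
  interpret mu: prob_space \<mu> by (rule \<mu>)
  interpret P: prob_space ?P by (rule prob_space_PiM) (use \<mu> in auto)
  define U where "U S = (\<Union>k\<in>S. grid_cell s k :: (real ^ 'd) set)" for S :: "('d \<Rightarrow> nat) set"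
  define D where "D S = {xs \<in> space ?P. emp_mass n xs (U S) \<le> measure \<mu> (U S) - t}" for S :: "('d \<Rightarrow> nat) set"
  have U_sets: "U S \<in> sets \<mu>" if "S \<subseteq> ?cells" for S
    unfolding U_def sets_eq using finite_subset[OF that finite_grid_cells] by (rule sets.finite_UN) simp
  have D_sets: "D S \<in> sets ?P" if "S \<subseteq> ?cells" for S
    unfolding D_def
    by (rule borel_measurable_le[OF borel_measurable_emp_mass[OF U_sets[OF that]] borel_measurable_const])
  have "{xs \<in> space ?P. t < grid_excess \<mu> n xs s} \<subseteq> (\<Union>S\<in>Pow ?cells. D S)"
  proof safe
    fix xs assume xs: "xs \<in> space ?P" and excess: "t < grid_excess \<mu> n xs s"
    obtain S where S: "S \<subseteq> ?cells"
      and deficit: "grid_excess \<mu> n xs s = measure \<mu> (U S) - emp_mass n xs (U S)"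
      unfolding U_def by (rule grid_excess_eq_union_deficit[OF mu.finite_measure_axioms sets_eq])
    have "xs \<in> D S" using xs excess deficit unfolding D_def by simp
    then show "xs \<in> (\<Union>S\<in>Pow ?cells. D S)" using S by blast
  qed
  then have "P.prob {xs \<in> space ?P. t < grid_excess \<mu> n xs s} \<le> P.prob (\<Union>S\<in>Pow ?cells. D S)"
    by (rule P.finite_measure_mono) (use D_sets finite_grid_cells in auto)
  also have "\<dots> \<le> (\<Sum>S\<in>Pow ?cells. P.prob (D S))"
    by (rule measure_UNION_le) (use D_sets finite_grid_cells in auto)
  also have "\<dots> \<le> (\<Sum>S\<in>Pow ?cells. exp (- 2 * real n * t\<^sup>2))"
    unfolding D_def by (intro sum_mono emp_mass_lower_deviation[OF \<mu> U_sets n t]) auto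
  also have "\<dots> = 2 ^ card ?cells * exp (- 2 * real n * t\<^sup>2)"
    by (simp add: card_Pow finite_grid_cells)
  finally show ?thesis .
qed

lemma n_mul_rate_sq_ge:
  fixes n d :: nat and \<alpha> :: real
  assumes \<alpha>: "0 \<le> \<alpha>" and n: "3 \<le> n"
  defines "t \<equiv> 2 ^ d * ln (real n) * real n powr (real d * \<alpha> / 2 - 1 / 2)"
  shows "(2 * real n powr \<alpha>) ^ d \<le> real n * t\<^sup>2" and "ln (real n) \<le> real n * t\<^sup>2"
proof -
  define L where "L = ln (real n)"
  define A where "A = real n powr \<alpha>"
  have n_pos: "0 < real n" using n by simp
  have L: "1 \<le> L"
  proof -
    have "exp 1 \<le> real n" using exp_le n by linarith
    then show ?thesis unfolding L_def using n_pos by (simp add: ln_ge_iff)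
  qed
  have A: "1 \<le> A" unfolding A_def using n \<alpha> by (simp add: ge_one_powr_ge_zero)
  have "real n * t\<^sup>2 = ((2::real) ^ d)\<^sup>2 * L\<^sup>2 * (real n * (real n powr (real d * \<alpha> / 2 - 1 / 2))\<^sup>2)"
    unfolding t_def L_def by (simp add: power_mult_distrib)
  also have "real n * (real n powr (real d * \<alpha> / 2 - 1 / 2))\<^sup>2 = real n powr (real d * \<alpha>)"
    by (rule mul_powr_half_sq[OF n_pos])
  also have "\<dots> = A ^ d"
    unfolding A_def using n_pos by (simp add: powr_power mult.commute)
  also have "((2::real) ^ d)\<^sup>2 = 4 ^ d"
    unfolding power2_eq_square power_mult_distrib[symmetric] by simp
  finally have nt2: "real n * t\<^sup>2 = 4 ^ d * L\<^sup>2 * A ^ d" .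
  have "1 \<le> L\<^sup>2" using L by (simp add: one_le_power)
  have "(2::real) ^ d \<le> 4 ^ d * 1" by (simp add: power_mono)
  also have "\<dots> \<le> 4 ^ d * L\<^sup>2" using \<open>1 \<le> L\<^sup>2\<close> by (rule mult_left_mono) simp
  finally show "(2 * real n powr \<alpha>) ^ d \<le> real n * t\<^sup>2"
    unfolding nt2 A_def[symmetric] using A by (simp add: power_mult_distrib mult_right_mono)
  have "L \<le> L\<^sup>2" using L by (simp add: power2_eq_square)
  also have "\<dots> \<le> L\<^sup>2 * (4 * A) ^ d"
  proof -
    have "1 \<le> (4 * A) ^ d" using A by (intro one_le_power) linarith
    then show ?thesis using mult_left_mono[of 1 "(4 * A) ^ d" "L\<^sup>2"] by simp
  qed
  also have "\<dots> = 4 ^ d * L\<^sup>2 * A ^ d" by (simp add: power_mult_distrib)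
  finally show "ln (real n) \<le> real n * t\<^sup>2" unfolding nt2 L_def .
qed

lemma grid_excess_le_with_high_prob:
  fixes \<mu> :: "(real ^ 'd) measure"
  assumes \<alpha>: "0 \<le> \<alpha>" and \<mu>: "prob_space \<mu>" and sets_eq: "sets \<mu> = sets borel" and n: "3 \<le> n"
  defines "t \<equiv> 2 ^ CARD('d) * ln (real n) * real n powr (real CARD('d) * \<alpha> / 2 - 1 / 2)"
  shows "1 - real n powr -1
         \<le> measure (PiM {..<n} (\<lambda>_. \<mu>))
             {xs \<in> space (PiM {..<n} (\<lambda>_. \<mu>)). grid_excess \<mu> n xs (real n powr -\<alpha>) \<le> t}"
proof -
  let ?P = "PiM {..<n} (\<lambda>_. \<mu>)"
  let ?s = "real n powr -\<alpha>"
  let ?cells = "grid_cells ?s :: ('d \<Rightarrow> nat) set"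
  interpret P: prob_space ?P by (rule prob_space_PiM) (use \<mu> in auto)
  have n_pos: "0 < real n" using n by simp
  have "1 \<le> real n powr \<alpha>" using n \<alpha> by (simp add: ge_one_powr_ge_zero)
  moreover have "?s = 1 / real n powr \<alpha>" by (simp add: powr_minus divide_inverse)
  ultimately have "real (grid_size ?s) \<le> 2 * real n powr \<alpha>"
    using grid_size_le[of "1 / real n powr \<alpha>"] n by simp
  then have "real (card ?cells) \<le> (2 * real n powr \<alpha>) ^ CARD('d)"
    unfolding card_grid_cells of_nat_power by (rule power_mono) simp
  also have "\<dots> \<le> real n * t\<^sup>2"
    unfolding t_def by (rule n_mul_rate_sq_ge(1)[OF \<alpha> n])
  finally have cells: "real (card ?cells) \<le> real n * t\<^sup>2" .
  have ln_n: "ln (real n) \<le> real n * t\<^sup>2"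
    unfolding t_def by (rule n_mul_rate_sq_ge(2)[OF \<alpha> n])
  have "P.prob {xs \<in> space ?P. t < grid_excess \<mu> n xs ?s} \<le> 2 ^ card ?cells * exp (- 2 * real n * t\<^sup>2)"
    using prob_grid_excess_gt_le[OF \<mu> sets_eq] n unfolding t_def by simp
  also have "\<dots> \<le> exp (- ln (real n))"
    using two_power_mul_exp_le[OF cells ln_n] by (simp add: mult.assoc)
  also have "\<dots> = real n powr -1"
    using n_pos by (simp add: powr_def)
  finally have excess_gt_prob: "P.prob {xs \<in> space ?P. t < grid_excess \<mu> n xs ?s} \<le> real n powr -1" .
  have "{xs \<in> space ?P. grid_excess \<mu> n xs ?s \<le> t}
      = space ?P - {xs \<in> space ?P. t < grid_excess \<mu> n xs ?s}"
    by auto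
  moreover have "{xs \<in> space ?P. t < grid_excess \<mu> n xs ?s} \<in> P.events"
    using borel_measurable_less[OF borel_measurable_const borel_measurable_grid_excess[OF sets_eq]] .
  ultimately show ?thesis using P.prob_compl excess_gt_prob by simp
qed

theorem lemmaA2:
  fixes \<alpha> :: real
  assumes "\<alpha> \<ge> 0"
  shows "\<exists>c>0. \<exists>(C::real) (p::nat) (N::nat). \<forall>(\<mu> :: (real ^ 'd) measure) (n::nat).
           prob_space \<mu> \<longrightarrow> sets \<mu> = sets borel \<longrightarrow> measure \<mu> unit_cube = 1 \<longrightarrow> n \<ge> N \<longrightarrow>
           measure (PiM {..<n} (\<lambda>_. \<mu>))
             {xs \<in> space (PiM {..<n} (\<lambda>_. \<mu>)).
                grid_excess \<mu> n xs (real n powr (-\<alpha>))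
                  \<le> C * (ln (real n)) ^ p * real n powr (real CARD('d) * \<alpha> / 2 - 1 / 2)}
           \<ge> 1 - real n powr (-c)"
proof (rule exI[of _ 1], rule conjI, simp, rule exI[of _ "2 ^ CARD('d)"], rule exI[of _ 1],
    rule exI[of _ 3], intro allI impI)
  fix \<mu> :: "(real ^ 'd) measure" and n :: nat
  assume \<mu>: "prob_space \<mu>" and sets_eq: "sets \<mu> = sets borel" and "measure \<mu> unit_cube = 1"
    and n: "3 \<le> n"
  \<comment> \<open>The cells lie in the cube by construction, so the mass of \<mu> outside it does not matter.\<close>
  show "1 - real n powr - 1
      \<le> measure (PiM {..<n} (\<lambda>_. \<mu>))
          {xs \<in> space (PiM {..<n} (\<lambda>_. \<mu>)).
             grid_excess \<mu> n xs (real n powr - \<alpha>)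
               \<le> 2 ^ CARD('d) * ln (real n) ^ 1 * real n powr (real CARD('d) * \<alpha> / 2 - 1 / 2)}"
    using grid_excess_le_with_high_prob[OF assms \<mu> sets_eq n] by simp
qed

end
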